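(* Let $\mu$ be a finite positive Borel measure on $\mathbb{T}$ with $\mu^c\ll\mu$, and let $h = d\mu^c/d\mu$. Let $\mathcal{H}$ be a separable complex Hilbert space and $J$ a conjugation on $\mathcal{H}$. Define $\mathbf{J}^\#$ on $\mathscr{L}^2(\mu,\mathcal{H})$ by $$(\mathbf{J}^\#\mathbf{f})(\xi) = h(\xi)^{1/2} J(\mathbf{f}(\overline{\xi}))\quad\text{for } \mu\text{-a.e. } \xi\in\mathbb{T}.$$ Then (a) $\mathbf{J}^\#$ is a conjugation on $\mathscr{L}^2(\mu,\mathcal{H})$, and (b) $\mathbf{J}^\#\mathbf{M}_\xi\mathbf{J}^\# = \mathbf{M}_\xi$.
   Context: A conjugation is an antilinear, isometric map $C$ with $C^2 = I$. $\mu^c(\Omega) := \mu(\{\overline{\xi}:\xi\in\Omega\})$. $\mathscr{L}^2(\mu,\mathcal{H})$ is the space of (classes of) $\mu$-measurable $\mathcal{H}$-valued functions $\mathbf{f}$ on $\mathbb{T}$ with $\int \|\mathbf{f}(\xi)\|_{\mathcal{H}}^2\,d\mu(\xi)<\infty$, and $(\mathbf{M}_\xi\mathbf{f})(\xi) = \xi\mathbf{f}(\xi)$. (Since $\mu^c\ll\mu$ implies $\mu\ll\mu^c$, $\mathbf{f}(\overline{\xi})$ is well defined $\mu$-a.e.) *)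

theory Defs
  imports "HOL-Analysis.Analysis"
begin

text \<open>The distribution has no class of complex vector spaces, so we introduce complex
  inner product spaces as a type class: a real normed vector space with a complex scalar
  multiplication extending the real one and a complex inner product (antilinear in the
  first argument) inducing the norm. A complex Hilbert space is then a type of this class
  that is also complete.\<close>

class complex_inner = real_normed_vector +
  fixes scaleC :: "complex \<Rightarrow> 'a \<Rightarrow> 'a" (infixr \<open>*\<^sub>C\<close> 75)
    and cinner :: "'a \<Rightarrow> 'a \<Rightarrow> complex"
  assumes scaleC_add_right: "a *\<^sub>C (x + y) = a *\<^sub>C x + a *\<^sub>C y"
    and scaleC_add_left: "(a + b) *\<^sub>C x = a *\<^sub>C x + b *\<^sub>C x"
    and scaleC_scaleC: "a *\<^sub>C (b *\<^sub>C x) = (a * b) *\<^sub>C x"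
    and scaleC_one: "1 *\<^sub>C x = x"
    and scaleR_scaleC: "r *\<^sub>R x = complex_of_real r *\<^sub>C x"
    and cinner_commute: "cinner x y = cnj (cinner y x)"
    and cinner_add_left: "cinner (x + y) z = cinner x z + cinner y z"
    and cinner_scaleC_left: "cinner (a *\<^sub>C x) y = cnj a * cinner x y"
    and cinner_self_norm: "cinner x x = complex_of_real ((norm x)\<^sup>2)"

instantiation complex :: complex_inner
begin
definition scaleC_complex :: "complex \<Rightarrow> complex \<Rightarrow> complex" where
  "scaleC_complex a x = a * x"
definition cinner_complex :: "complex \<Rightarrow> complex \<Rightarrow> complex" where
  "cinner_complex x y = cnj x * y"
instance
proof
  fix a b x y z :: complex and r :: real
  show "a *\<^sub>C (x + y) = a *\<^sub>C x + a *\<^sub>C y" by (simp add: scaleC_complex_def algebra_simps)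
  show "(a + b) *\<^sub>C x = a *\<^sub>C x + b *\<^sub>C x" by (simp add: scaleC_complex_def algebra_simps)
  show "a *\<^sub>C (b *\<^sub>C x) = (a * b) *\<^sub>C x" by (simp add: scaleC_complex_def)
  show "1 *\<^sub>C x = x" by (simp add: scaleC_complex_def)
  show "r *\<^sub>R x = complex_of_real r *\<^sub>C x" by (simp add: scaleC_complex_def scaleR_conv_of_real)
  show "cinner x y = cnj (cinner y x)" by (simp add: cinner_complex_def mult.commute)
  show "cinner (x + y) z = cinner x z + cinner y z" by (simp add: cinner_complex_def algebra_simps)
  show "cinner (a *\<^sub>C x) y = cnj a * cinner x y" by (simp add: cinner_complex_def scaleC_complex_def)
  show "cinner x x = complex_of_real ((norm x)\<^sup>2)" unfolding cinner_complex_def complex_norm_square by (simp add: mult.commute)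
qed
end

definition is_conjugation :: "('h::complex_inner \<Rightarrow> 'h) \<Rightarrow> bool" where
  "is_conjugation C \<longleftrightarrow>
     (\<forall>a b x y. C (a *\<^sub>C x + b *\<^sub>C y) = cnj a *\<^sub>C C x + cnj b *\<^sub>C C y) \<and>
     (\<forall>x. norm (C x) = norm x) \<and>
     (\<forall>x. C (C x) = x)"

text \<open>Elements of L2 are their classes modulo mu-a.e. equality; maps on
  L2 are given by maps on representatives that respect a.e. equality.\<close>

definition L2 :: "complex measure \<Rightarrow> (complex \<Rightarrow> 'h::real_normed_vector) set" where
  "L2 \<mu> = {f. f \<in> borel_measurable \<mu> \<and> integrable \<mu> (\<lambda>x. (norm (f x))\<^sup>2)}"

definition L2_norm :: "complex measure \<Rightarrow> (complex \<Rightarrow> 'h::real_normed_vector) \<Rightarrow> real" where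
  "L2_norm \<mu> f = sqrt (\<integral>x. (norm (f x))\<^sup>2 \<partial>\<mu>)"

definition is_L2_conjugation ::
  "complex measure \<Rightarrow> ((complex \<Rightarrow> 'h::complex_inner) \<Rightarrow> (complex \<Rightarrow> 'h)) \<Rightarrow> bool" where
  "is_L2_conjugation \<mu> C \<longleftrightarrow>
     (\<forall>f \<in> L2 \<mu>. C f \<in> L2 \<mu>) \<and>
     (\<forall>f \<in> L2 \<mu>. \<forall>g \<in> L2 \<mu>. (AE x in \<mu>. f x = g x) \<longrightarrow> (AE x in \<mu>. C f x = C g x)) \<and>
     (\<forall>f \<in> L2 \<mu>. \<forall>g \<in> L2 \<mu>. \<forall>a b.
        AE x in \<mu>. C (\<lambda>y. a *\<^sub>C f y + b *\<^sub>C g y) x = cnj a *\<^sub>C C f x + cnj b *\<^sub>C C g x) \<and>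
     (\<forall>f \<in> L2 \<mu>. L2_norm \<mu> (C f) = L2_norm \<mu> f) \<and>
     (\<forall>f \<in> L2 \<mu>. AE x in \<mu>. C (C f) x = f x)"

text \<open>mu^c(Omega) = mu(conj Omega), i.e. the push-forward of mu under conjugation.\<close>
definition conj_measure :: "complex measure \<Rightarrow> complex measure" where
  "conj_measure \<mu> = distr \<mu> \<mu> cnj"

definition Jsharp ::
  "complex measure \<Rightarrow> ('h::complex_inner \<Rightarrow> 'h) \<Rightarrow> (complex \<Rightarrow> 'h) \<Rightarrow> (complex \<Rightarrow> 'h)" where
  "Jsharp \<mu> J f = (\<lambda>\<xi>. sqrt (enn2real (RN_deriv \<mu> (conj_measure \<mu>) \<xi>)) *\<^sub>R J (f (cnj \<xi>)))"

definition Mxi :: "(complex \<Rightarrow> 'h::complex_inner) \<Rightarrow> (complex \<Rightarrow> 'h)" where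
  "Mxi f = (\<lambda>\<xi>. \<xi> *\<^sub>C f \<xi>)"

end

theory Submission
  imports Defs
begin

text \<open>Write \<open>\<rho> = d\<mu>\<^sup>c/d\<mu>\<close>. Since conjugation is a measurable involution, the chain rule
  for Radon-Nikodym derivatives gives \<open>\<rho>(\<xi>) \<rho>(cnj \<xi>) = 1\<close> almost everywhere, and the change of
  variables \<open>\<integral> \<rho> (g \<circ> cnj) d\<mu> = \<integral> g d\<mu>\<close> shows that \<open>J\<^sup>#\<close> is isometric. Applying \<open>J\<^sup>#\<close> twice
  produces the factor \<open>(\<rho>(\<xi>) \<rho>(cnj \<xi>))\<^sup>1\<^sup>/\<^sup>2 = 1\<close>, and antilinearity of \<open>J\<close> turns the multiplier
  \<open>cnj \<xi>\<close> picked up on the way back into \<open>\<xi>\<close>. Nothing else about the circle or about conjugation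
  is used, so the argument is carried out for an arbitrary measurable involution under which the
  measure is quasi-invariant.\<close>

lemma scaleC_zero_left [simp]: "(0::complex) *\<^sub>C (x::'a::complex_inner) = 0"
  using scaleR_scaleC[of 0 x] by simp

lemma scaleR_scaleC_commute: "r *\<^sub>R (a *\<^sub>C (x::'a::complex_inner)) = a *\<^sub>C (r *\<^sub>R x)"
  by (simp add: scaleR_scaleC scaleC_scaleC mult.commute)

locale conjugation =
  fixes J :: "'h::complex_inner \<Rightarrow> 'h"
  assumes is_conjugation: "is_conjugation J"
begin

lemma J_antilinear: "J (a *\<^sub>C x + b *\<^sub>C y) = cnj a *\<^sub>C J x + cnj b *\<^sub>C J y"
  using is_conjugation unfolding is_conjugation_def by blast

lemma norm_J [simp]: "norm (J x) = norm x"
  using is_conjugation unfolding is_conjugation_def by blast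

lemma J_J [simp]: "J (J x) = x"
  using is_conjugation unfolding is_conjugation_def by blast

lemma J_scaleC: "J (a *\<^sub>C x) = cnj a *\<^sub>C J x"
  using J_antilinear[of a x 0 x] by simp

lemma J_scaleR: "J (r *\<^sub>R x) = r *\<^sub>R J x"
  by (simp add: scaleR_scaleC J_scaleC)

lemma J_diff: "J (x - y) = J x - J y"
  using J_antilinear[of 1 x 1 "-y"] J_scaleR[of "-1" y] by (simp add: scaleC_one)

lemma continuous_J: "continuous_on UNIV J"
  unfolding continuous_on_iff by (metis J_diff dist_norm norm_J)

lemma borel_measurable_J: "J \<in> borel_measurable borel"
  using continuous_J by (rule borel_measurable_continuous_onI)

end

lemma LIMSEQ_dyadic_floor: "(\<lambda>n. real_of_int \<lfloor>y * 2 ^ n\<rfloor> / 2 ^ n) \<longlonglongrightarrow> y"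
proof (rule tendsto_sandwich)
  show "(\<lambda>n. y - (1/2) ^ n) \<longlonglongrightarrow> y"
    by (auto intro!: tendsto_eq_intros LIMSEQ_power_zero)
  have "y - (1/2) ^ n \<le> real_of_int \<lfloor>y * 2 ^ n\<rfloor> / 2 ^ n" for n :: nat
  proof -
    have "y - (1/2) ^ n = (y * 2 ^ n - 1) / 2 ^ n"
      by (simp add: field_simps power_one_over)
    also have "\<dots> \<le> real_of_int \<lfloor>y * 2 ^ n\<rfloor> / 2 ^ n"
      by (intro divide_right_mono) (linarith, simp)
    finally show ?thesis .
  qed
  then show "\<forall>\<^sub>F n in sequentially. y - (1/2) ^ n \<le> real_of_int \<lfloor>y * 2 ^ n\<rfloor> / 2 ^ n"
    by simp
  show "\<forall>\<^sub>F n in sequentially. real_of_int \<lfloor>y * 2 ^ n\<rfloor> / 2 ^ n \<le> y"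
    by (auto simp: field_simps)
qed simp

lemma borel_measurable_scaleR_metric:
  fixes g :: "'a \<Rightarrow> 'b::real_normed_vector"
  assumes f: "f \<in> borel_measurable M" and g: "g \<in> borel_measurable M"
  shows "(\<lambda>x. f x *\<^sub>R g x) \<in> borel_measurable M"
proof (rule borel_measurable_LIMSEQ_metric)
  fix n :: nat
  have "(\<lambda>x. \<lfloor>f x * 2 ^ n\<rfloor>) \<in> measurable M (count_space UNIV)"
    using f by measurable
  moreover have "(\<lambda>x. (real_of_int i / 2 ^ n) *\<^sub>R g x) \<in> borel_measurable M" for i :: int
    using g by measurable
  ultimately show "(\<lambda>x. (real_of_int \<lfloor>f x * 2 ^ n\<rfloor> / 2 ^ n) *\<^sub>R g x) \<in> borel_measurable M"
    by (rule measurable_compose_countable[where f = "\<lambda>i x. (real_of_int i / 2 ^ n) *\<^sub>R g x", rotated])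
next
  show "(\<lambda>n. (real_of_int \<lfloor>f x * 2 ^ n\<rfloor> / 2 ^ n) *\<^sub>R g x) \<longlonglongrightarrow> f x *\<^sub>R g x" for x
    by (intro tendsto_scaleR LIMSEQ_dyadic_floor tendsto_const)
qed

locale quasi_invariant_involution = finite_measure M for M :: "'a measure" +
  fixes \<sigma> :: "'a \<Rightarrow> 'a"
  assumes measurable_involution [measurable]: "\<sigma> \<in> M \<rightarrow>\<^sub>M M"
    and involution: "\<And>x. x \<in> space M \<Longrightarrow> \<sigma> (\<sigma> x) = x"
    and absolutely_continuous_distr: "absolutely_continuous M (distr M M \<sigma>)"
begin

abbreviation density_ratio :: "'a \<Rightarrow> ennreal" where
  "density_ratio \<equiv> RN_deriv M (distr M M \<sigma>)"

lemma distr_distr_involution: "distr (distr M M \<sigma>) M \<sigma> = M"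
proof -
  have "distr (distr M M \<sigma>) M \<sigma> = distr M M (\<sigma> \<circ> \<sigma>)"
    by (rule distr_distr) measurable
  also have "\<dots> = distr M M (\<lambda>x. x)"
    by (rule distr_cong) (simp_all add: involution)
  finally show ?thesis
    by (simp add: distr_id)
qed

lemma density_density_ratio: "density M density_ratio = distr M M \<sigma>"
  using absolutely_continuous_distr by (rule density_RN_deriv) simp

lemma AE_density_ratio_finite: "AE x in M. density_ratio x \<noteq> \<infinity>"
proof (rule RN_deriv_finite)
  show "sigma_finite_measure (distr M M \<sigma>)"
    using finite_measure_distr[OF measurable_involution] by (simp add: finite_measure_def)
qed (simp_all add: absolutely_continuous_distr)

lemma AE_involution:
  assumes "AE x in M. P x"
  shows "AE x in M. P (\<sigma> x)"
proof (rule AE_distrD[of \<sigma> M M])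
  show "AE x in distr M M \<sigma>. P x"
    using absolutely_continuous_distr assms by (rule absolutely_continuous_AE[rotated]) simp
qed measurable

lemma nn_integral_density_ratio:
  assumes [measurable]: "g \<in> borel_measurable M"
  shows "(\<integral>\<^sup>+x. density_ratio x * g (\<sigma> x) \<partial>M) = integral\<^sup>N M g"
proof -
  have "(\<integral>\<^sup>+x. density_ratio x * g (\<sigma> x) \<partial>M) = (\<integral>\<^sup>+x. g (\<sigma> x) \<partial>distr M M \<sigma>)"
    using absolutely_continuous_distr by (rule RN_deriv_nn_integral[symmetric]) simp_all
  also have "\<dots> = (\<integral>\<^sup>+x. g (\<sigma> (\<sigma> x)) \<partial>M)"
    by (rule nn_integral_distr) measurable
  also have "\<dots> = integral\<^sup>N M g"
    by (rule nn_integral_cong) (simp add: involution)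
  finally show ?thesis .
qed

text \<open>With \<open>\<rho> = density_ratio\<close>: pushing \<open>density M \<rho> = distr M M \<sigma>\<close> forward along \<open>\<sigma>\<close> gives back
  \<open>M\<close>, so \<open>\<rho> \<circ> \<sigma>\<close> is the density of \<open>M\<close> with respect to \<open>distr M M \<sigma>\<close>, and \<open>\<rho> (\<rho> \<circ> \<sigma>)\<close> is
  the density of \<open>M\<close> with respect to itself.\<close>
lemma AE_density_ratio_mult_involution: "AE x in M. density_ratio x * density_ratio (\<sigma> x) = 1"
proof (rule density_unique)
  have "density M (\<lambda>x. density_ratio x * density_ratio (\<sigma> x))
      = density (density M density_ratio) (density_ratio \<circ> \<sigma>)"
    by (simp add: density_density_eq comp_def)
  also have "\<dots> = distr (density (distr (distr M M \<sigma>) M \<sigma>) density_ratio) (distr M M \<sigma>) \<sigma>"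
    unfolding density_density_ratio
    by (rule distr_density_distr[symmetric]) (simp_all add: involution)
  also have "\<dots> = distr (distr M M \<sigma>) M \<sigma>"
    by (simp add: distr_distr_involution density_density_ratio cong: distr_cong)
  finally show "density M (\<lambda>x. density_ratio x * density_ratio (\<sigma> x)) = density M (\<lambda>x. 1)"
    by (simp add: distr_distr_involution density_1)
qed measurable

end

definition reflection_conjugation ::
  "'a measure \<Rightarrow> ('a \<Rightarrow> 'a) \<Rightarrow> ('h::complex_inner \<Rightarrow> 'h) \<Rightarrow> ('a \<Rightarrow> 'h) \<Rightarrow> 'a \<Rightarrow> 'h" where
  "reflection_conjugation M \<sigma> J f x = sqrt (enn2real (RN_deriv M (distr M M \<sigma>) x)) *\<^sub>R J (f (\<sigma> x))"

locale quasi_invariant_reflection = quasi_invariant_involution M \<sigma> + conjugation J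
  for M :: "'a measure" and \<sigma> :: "'a \<Rightarrow> 'a" and J :: "'h::complex_inner \<Rightarrow> 'h"
begin

abbreviation R :: "('a \<Rightarrow> 'h) \<Rightarrow> 'a \<Rightarrow> 'h" where
  "R \<equiv> reflection_conjugation M \<sigma> J"

lemma borel_measurable_reflection:
  assumes "f \<in> borel_measurable M"
  shows "R f \<in> borel_measurable M"
  unfolding reflection_conjugation_def
  by (intro borel_measurable_scaleR_metric measurable_compose[OF _ borel_measurable_J])
    (use assms in measurable)

lemma nn_integral_norm_reflection:
  assumes [measurable]: "f \<in> borel_measurable M"
  shows "(\<integral>\<^sup>+x. ennreal ((norm (R f x))\<^sup>2) \<partial>M) = (\<integral>\<^sup>+x. ennreal ((norm (f x))\<^sup>2) \<partial>M)"
proof -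
  have "(\<integral>\<^sup>+x. ennreal ((norm (R f x))\<^sup>2) \<partial>M)
      = (\<integral>\<^sup>+x. density_ratio x * ennreal ((norm (f (\<sigma> x)))\<^sup>2) \<partial>M)"
    using AE_density_ratio_finite
    by (intro nn_integral_cong_AE) (auto elim!: eventually_mono simp: reflection_conjugation_def
        power_mult_distrib ennreal_mult'' ennreal_enn2real_if top.not_eq_extremum)
  also have "\<dots> = (\<integral>\<^sup>+x. ennreal ((norm (f x))\<^sup>2) \<partial>M)"
    by (rule nn_integral_density_ratio) measurable
  finally show ?thesis .
qed

lemma integral_norm_reflection:
  assumes [measurable]: "f \<in> borel_measurable M" and "integrable M (\<lambda>x. (norm (f x))\<^sup>2)"
  shows "integrable M (\<lambda>x. (norm (R f x))\<^sup>2)"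
    and "(\<integral>x. (norm (R f x))\<^sup>2 \<partial>M) = (\<integral>x. (norm (f x))\<^sup>2 \<partial>M)"
proof -
  have [measurable]: "R f \<in> borel_measurable M"
    by (rule borel_measurable_reflection) measurable
  have "(\<integral>\<^sup>+x. ennreal ((norm (R f x))\<^sup>2) \<partial>M) = ennreal (\<integral>x. (norm (f x))\<^sup>2 \<partial>M)"
    using assms(2) by (simp add: nn_integral_norm_reflection nn_integral_eq_integral)
  then show "integrable M (\<lambda>x. (norm (R f x))\<^sup>2)"
    by (intro integrableI_nn_integral_finite) auto
  then show "(\<integral>x. (norm (R f x))\<^sup>2 \<partial>M) = (\<integral>x. (norm (f x))\<^sup>2 \<partial>M)"
    using assms(2) nn_integral_norm_reflection
    by (simp add: integral_eq_nn_integral)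
qed

lemma AE_reflection_cong:
  assumes "AE x in M. f x = g x"
  shows "AE x in M. R f x = R g x"
  using AE_involution[OF assms] by eventually_elim (simp add: reflection_conjugation_def)

lemma reflection_antilinear:
  "R (\<lambda>y. a *\<^sub>C f y + b *\<^sub>C g y) x = cnj a *\<^sub>C R f x + cnj b *\<^sub>C R g x"
  by (simp add: reflection_conjugation_def J_antilinear scaleR_add_right scaleR_scaleC_commute)

lemma AE_reflection_mult_reflection:
  "AE x in M. R (\<lambda>y. \<phi> y *\<^sub>C R f y) x = cnj (\<phi> (\<sigma> x)) *\<^sub>C f x"
proof -
  have "AE x in M. sqrt (enn2real (density_ratio x)) * sqrt (enn2real (density_ratio (\<sigma> x))) = 1"
    using AE_density_ratio_mult_involution
    by eventually_elim (metis enn2real_1 enn2real_mult real_sqrt_mult real_sqrt_one)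
  with AE_space show ?thesis
    by eventually_elim
      (simp add: reflection_conjugation_def J_scaleR J_scaleC scaleR_scaleC_commute involution)
qed

lemma AE_reflection_reflection: "AE x in M. R (R f) x = f x"
  using AE_reflection_mult_reflection[of "\<lambda>_. 1" f] by (simp add: scaleC_one)

end

lemma is_L2_conjugation_reflection:
  fixes \<mu> :: "complex measure"
  assumes "quasi_invariant_reflection \<mu> \<sigma> J"
  shows "is_L2_conjugation \<mu> (reflection_conjugation \<mu> \<sigma> J)"
proof -
  interpret quasi_invariant_reflection \<mu> \<sigma> J
    by (fact assms)
  show ?thesis
    unfolding is_L2_conjugation_def L2_def L2_norm_def
    by (simp add: borel_measurable_reflection integral_norm_reflection AE_reflection_cong
        reflection_antilinear AE_reflection_reflection)
qed

lemma quasi_invariant_involution_cnj: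
  fixes \<mu> :: "complex measure"
  assumes sets: "sets \<mu> = sets (restrict_space borel S)" and "cnj ` S \<subseteq> S"
    and "finite_measure \<mu>" and "absolutely_continuous \<mu> (conj_measure \<mu>)"
  shows "quasi_invariant_involution \<mu> cnj"
proof -
  have "cnj \<in> restrict_space borel S \<rightarrow>\<^sub>M restrict_space borel S"
    by (rule measurable_restrict_space3[OF borel_measurable_continuous_onI])
      (use assms(2) in \<open>auto intro: continuous_intros\<close>)
  then have "cnj \<in> \<mu> \<rightarrow>\<^sub>M \<mu>"
    using measurable_cong_sets[OF sets sets] by simp
  with assms show ?thesis
    by (simp add: quasi_invariant_involution_def quasi_invariant_involution_axioms_def conj_measure_def)
qed

lemma Jsharp_eq_reflection_conjugation: "Jsharp \<mu> J = reflection_conjugation \<mu> cnj J"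
  by (simp add: fun_eq_iff Jsharp_def reflection_conjugation_def conj_measure_def)

theorem proposition5p3:
  fixes \<mu> :: "complex measure"
    and J :: "'h::{complex_inner, complete_space} \<Rightarrow> 'h"
  assumes "sets \<mu> = sets (restrict_space borel (sphere (0::complex) 1))"
    and "finite_measure \<mu>"
    and "absolutely_continuous \<mu> (conj_measure \<mu>)"
    and "\<exists>D::'h set. countable D \<and> closure D = UNIV"
    and "is_conjugation J"
  shows "is_L2_conjugation \<mu> (Jsharp \<mu> J) \<and>
         (\<forall>f \<in> L2 \<mu>. AE \<xi> in \<mu>. Jsharp \<mu> J (Mxi (Jsharp \<mu> J f)) \<xi> = Mxi f \<xi>)"
proof -
  have "quasi_invariant_involution \<mu> cnj"
    by (rule quasi_invariant_involution_cnj[OF assms(1) _ assms(2,3)]) auto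
  then interpret quasi_invariant_reflection \<mu> cnj J
    using assms(5) by (simp add: quasi_invariant_reflection_def conjugation_def)
  show ?thesis
    using is_L2_conjugation_reflection[OF quasi_invariant_reflection_axioms]
      AE_reflection_mult_reflection[of "\<lambda>\<xi>. \<xi>"]
    by (simp add: Jsharp_eq_reflection_conjugation Mxi_def)
qed

end
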